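(* The function $\Phi(\alpha,\beta)=\left(\frac{1+\sqrt{\alpha\beta}}{\sqrt{\alpha}+\sqrt{\beta}}\right)^2$ is nondecreasing in each variable on $[1,\infty)^2$. Consequently, if $A,B$ are $2\times2$ matrices with strictly positive entries, $\alpha,\beta\ge1$, $R(A)\le\alpha$ and $R(B)\le\beta$, then $R(AB)\le\Phi(\alpha,\beta)$.
   Context: For a $2\times2$ matrix $A=(a_{ij})$ with strictly positive entries, $F(A)=\frac{a_{11}a_{22}}{a_{12}a_{21}}$ and the distortion is $R(A)=\max\{F(A),1/F(A)\}$. *)

theory Defs
  imports "HOL-Analysis.Analysis"
begin

definition pos_matrix :: "real^2^2 \<Rightarrow> bool" where
  "pos_matrix A \<longleftrightarrow> (\<forall>i j. A $ i $ j > 0)"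

definition crossF :: "real^2^2 \<Rightarrow> real" where
  "crossF A = (A $ 1 $ 1 * A $ 2 $ 2) / (A $ 1 $ 2 * A $ 2 $ 1)"

definition distortion :: "real^2^2 \<Rightarrow> real" where
  "distortion A = max (crossF A) (1 / crossF A)"

definition Phi :: "real \<Rightarrow> real \<Rightarrow> real" where
  "Phi \<alpha> \<beta> = ((1 + sqrt (\<alpha> * \<beta>)) / (sqrt \<alpha> + sqrt \<beta>))\<^sup>2"

end

theory Submission
  imports Defs
begin

text \<open>Write \<open>u = F(A)\<close>, \<open>v = F(B)\<close>. Expanding the entries of \<open>AB\<close> gives
  \<open>F(AB) = (k + uv + 1) / (k + u + v)\<close> with \<open>k \<ge> 2\<surd>(uv)\<close> by AM-GM. If \<open>u - 1\<close> and
  \<open>v - 1\<close> have opposite signs this is at most \<open>1\<close>; otherwise it decreases in \<open>k\<close>, so it is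
  at most its value at \<open>k = 2\<surd>(uv)\<close>, which is \<open>\<psi>(\<surd>u, \<surd>v)\<^sup>2\<close> for
  \<open>\<psi>(x, y) = (1 + xy) / (x + y)\<close>. Since \<open>\<psi>(1/x, 1/y) = \<psi>(x, y)\<close> we may take
  \<open>u, v \<ge> 1\<close>, and \<open>\<psi>\<close> is nondecreasing in each variable on \<open>[1,\<infinity>)\<^sup>2\<close>, while
  \<open>\<Phi>(\<alpha>, \<beta>) = \<psi>(\<surd>\<alpha>, \<surd>\<beta>)\<^sup>2\<close>.\<close>

definition psi :: "real \<Rightarrow> real \<Rightarrow> real" where
  "psi x y = (1 + x * y) / (x + y)"

lemma psi_commute: "psi x y = psi y x"
  unfolding psi_def by (simp add: algebra_simps)

lemma psi_inverse:
  assumes "x > 0" "y > 0"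
  shows "psi (1 / x) (1 / y) = psi x y"
proof -
  have "1 + 1 / x * (1 / y) = (1 + x * y) / (x * y)" "1 / x + 1 / y = (x + y) / (x * y)"
    using assms by (simp_all add: field_simps)
  with assms show ?thesis
    unfolding psi_def by simp
qed

lemma psi_mono_left:
  assumes "1 \<le> y" "0 < x" "x \<le> x'"
  shows "psi x y \<le> psi x' y"
proof -
  have "1 * 1 \<le> y * y"
    using assms by (intro mult_mono) auto
  then have "(x' - x) * 1 \<le> (x' - x) * (y * y)"
    using assms by (intro mult_left_mono) auto
  then have "(1 + x * y) * (x' + y) \<le> (1 + x' * y) * (x + y)"
    by (simp add: algebra_simps)
  then show ?thesis
    using assms unfolding psi_def by (simp add: divide_simps)
qed

lemma psi_mono:
  assumes "1 \<le> x" "x \<le> x'" "1 \<le> y" "y \<le> y'"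
  shows "psi x y \<le> psi x' y'"
proof -
  have "psi x y \<le> psi x' y"
    using assms by (intro psi_mono_left) auto
  also have "\<dots> = psi y x'" by (rule psi_commute)
  also have "\<dots> \<le> psi y' x'"
    using assms by (intro psi_mono_left) auto
  finally show ?thesis by (simp add: psi_commute)
qed

lemma psi_nonneg: "0 \<le> x \<Longrightarrow> 0 \<le> y \<Longrightarrow> 0 \<le> psi x y"
  unfolding psi_def by simp

lemma Phi_eq_psi_sqrt:
  assumes "0 \<le> \<alpha>" "0 \<le> \<beta>"
  shows "Phi \<alpha> \<beta> = (psi (sqrt \<alpha>) (sqrt \<beta>))\<^sup>2"
  using assms unfolding Phi_def psi_def by (simp add: real_sqrt_mult)

lemma Phi_mono:
  assumes "1 \<le> \<alpha>" "\<alpha> \<le> \<alpha>'" "1 \<le> \<beta>" "\<beta> \<le> \<beta>'"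
  shows "Phi \<alpha> \<beta> \<le> Phi \<alpha>' \<beta>'"
proof -
  have "psi (sqrt \<alpha>) (sqrt \<beta>) \<le> psi (sqrt \<alpha>') (sqrt \<beta>')"
    using assms by (intro psi_mono) auto
  then show ?thesis
    using assms by (simp add: Phi_eq_psi_sqrt power_mono psi_nonneg)
qed

lemma one_le_Phi:
  assumes "1 \<le> \<alpha>" "1 \<le> \<beta>"
  shows "1 \<le> Phi \<alpha> \<beta>"
  using Phi_mono[OF order_refl _ order_refl, of \<alpha> \<beta>] assms by (simp add: Phi_def)

lemma psi_le_psi_if_same_side:
  assumes "x > 0" "y > 0" "(x - 1) * (y - 1) \<ge> 0"
    and "x \<le> a" "1 / x \<le> a" "y \<le> b" "1 / y \<le> b"
  shows "psi x y \<le> psi a b"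
proof -
  consider "1 \<le> x" "1 \<le> y" | "x \<le> 1" "y \<le> 1"
    using assms(3) by (fastforce simp: zero_le_mult_iff)
  then show ?thesis
  proof cases
    case 1
    with assms show ?thesis by (intro psi_mono) auto
  next
    case 2
    with assms have "psi (1 / x) (1 / y) \<le> psi a b"
      by (intro psi_mono) auto
    with assms show ?thesis by (simp add: psi_inverse)
  qed
qed

lemma cross_ratio_le_psi_square:
  assumes "x > 0" "y > 0" "k \<ge> 2 * x * y" "(x - 1) * (y - 1) \<ge> 0"
  shows "(k + x\<^sup>2 * y\<^sup>2 + 1) / (k + x\<^sup>2 + y\<^sup>2) \<le> (psi x y)\<^sup>2"
proof -
  have "(x\<^sup>2 - 1) * (y\<^sup>2 - 1) = ((x - 1) * (y - 1)) * ((x + 1) * (y + 1))"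
    by (simp add: power2_eq_square algebra_simps)
  then have gap: "(x\<^sup>2 - 1) * (y\<^sup>2 - 1) \<ge> 0"
    using assms by simp
  have den: "2 * x * y + x\<^sup>2 + y\<^sup>2 > 0"
    using assms by (simp add: add_pos_pos)
  have "(k + x\<^sup>2 * y\<^sup>2 + 1) / (k + x\<^sup>2 + y\<^sup>2)
        = 1 + (x\<^sup>2 - 1) * (y\<^sup>2 - 1) / (k + x\<^sup>2 + y\<^sup>2)"
    using den assms by (simp add: field_simps)
  also have "\<dots> \<le> 1 + (x\<^sup>2 - 1) * (y\<^sup>2 - 1) / (2 * x * y + x\<^sup>2 + y\<^sup>2)"
    using gap den assms by (simp add: divide_left_mono)
  also have "\<dots> = (1 + x * y)\<^sup>2 / (x + y)\<^sup>2"
    using den assms by (simp add: field_simps power2_eq_square)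
  finally show ?thesis by (simp add: psi_def power_divide)
qed

lemma one_le_max_inverse:
  fixes u :: real
  assumes "u > 0"
  shows "1 \<le> max u (1 / u)"
proof (cases "u \<le> 1")
  case True
  with assms have "1 \<le> 1 / u" by simp
  then show ?thesis by (simp add: le_max_iff_disj)
qed simp

lemma cross_ratio_le_Phi:
  assumes "u > 0" "v > 0" "k \<ge> 2 * sqrt (u * v)"
    and "max u (1 / u) \<le> \<alpha>" "max v (1 / v) \<le> \<beta>"
  shows "(k + u * v + 1) / (k + u + v) \<le> Phi \<alpha> \<beta>"
proof (cases "(u - 1) * (v - 1) \<le> 0")
  case True
  have "1 \<le> \<alpha>" "1 \<le> \<beta>"
    using assms one_le_max_inverse[of u] one_le_max_inverse[of v] by linarith+
  have "0 \<le> sqrt (u * v)"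
    using assms by simp
  then have "0 \<le> k"
    using assms(3) by linarith
  then have "k + u + v > 0" using assms by simp
  moreover have "k + u * v + 1 \<le> k + u + v"
    using True by (simp add: algebra_simps)
  ultimately have "(k + u * v + 1) / (k + u + v) \<le> 1" by simp
  also have "\<dots> \<le> Phi \<alpha> \<beta>"
    using \<open>1 \<le> \<alpha>\<close> \<open>1 \<le> \<beta>\<close> by (rule one_le_Phi)
  finally show ?thesis .
next
  case False
  define x y where "x = sqrt u" and "y = sqrt v"
  have xy: "x > 0" "y > 0" "u = x\<^sup>2" "v = y\<^sup>2"
    using assms by (simp_all add: x_def y_def)
  have "(u - 1) * (v - 1) = ((x - 1) * (y - 1)) * ((x + 1) * (y + 1))"
    by (simp add: xy power2_eq_square algebra_simps)
  with False have "0 < ((x - 1) * (y - 1)) * ((x + 1) * (y + 1))"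
    by linarith
  moreover have "0 < (x + 1) * (y + 1)"
    using xy by simp
  ultimately have "(x - 1) * (y - 1) > 0"
    by (rule zero_less_mult_pos2)
  then have same_side: "(x - 1) * (y - 1) \<ge> 0"
    by simp
  have inverse: "1 / x = sqrt (1 / u)" "1 / y = sqrt (1 / v)"
    by (simp_all add: x_def y_def real_sqrt_divide)
  have "x \<le> sqrt \<alpha>" "1 / x \<le> sqrt \<alpha>" "y \<le> sqrt \<beta>" "1 / y \<le> sqrt \<beta>"
    unfolding inverse using assms(4,5) by (auto simp: x_def y_def intro: real_sqrt_le_mono)
  with xy same_side have psi_le: "psi x y \<le> psi (sqrt \<alpha>) (sqrt \<beta>)"
    by (intro psi_le_psi_if_same_side)
  have "k \<ge> 2 * x * y"
    using assms(3) by (simp add: x_def y_def real_sqrt_mult)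
  then have "(k + u * v + 1) / (k + u + v) \<le> (psi x y)\<^sup>2"
    using xy same_side by (simp add: cross_ratio_le_psi_square power_mult_distrib)
  also have "\<dots> \<le> (psi (sqrt \<alpha>) (sqrt \<beta>))\<^sup>2"
    using psi_le xy by (simp add: power_mono psi_nonneg)
  also have "\<dots> = Phi \<alpha> \<beta>"
    using assms one_le_max_inverse[of u] one_le_max_inverse[of v]
    by (simp add: Phi_eq_psi_sqrt)
  finally show ?thesis .
qed

lemma crossF_pos: "pos_matrix A \<Longrightarrow> crossF A > 0"
  unfolding pos_matrix_def crossF_def by simp

lemma cross_ratio_product:
  fixes a b c d e f g h :: real
  assumes "b \<noteq> 0" "c \<noteq> 0" "f \<noteq> 0" "g \<noteq> 0"
  defines "k \<equiv> a * e / (b * g) + d * h / (c * f)"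
  shows "(a * e + b * g) * (c * f + d * h) / ((a * f + b * h) * (c * e + d * g))
       = (k + (a * d / (b * c)) * (e * h / (f * g)) + 1) / (k + a * d / (b * c) + e * h / (f * g))"
proof -
  have "(a * e + b * g) * (c * f + d * h)
        = (b * c * f * g) * (k + (a * d / (b * c)) * (e * h / (f * g)) + 1)"
    "(a * f + b * h) * (c * e + d * g) = (b * c * f * g) * (k + a * d / (b * c) + e * h / (f * g))"
    using assms by (simp_all add: field_simps)
  with assms show ?thesis by simp
qed

lemma crossF_matrix_mult:
  fixes A B :: "real^2^2"
  assumes "pos_matrix A" "pos_matrix B"
  obtains k where "k \<ge> 2 * sqrt (crossF A * crossF B)"
    and "crossF (A ** B) = (k + crossF A * crossF B + 1) / (k + crossF A + crossF B)"
proof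
  have pos: "\<And>i j. A$i$j > 0" "\<And>i j. B$i$j > 0"
    using assms unfolding pos_matrix_def by auto
  then have nonzero: "\<And>i j. A$i$j \<noteq> 0" "\<And>i j. B$i$j \<noteq> 0"
    by (metis order_less_irrefl)+
  define p q where "p = A$1$1 * B$1$1 / (A$1$2 * B$2$1)" and "q = A$2$2 * B$2$2 / (A$2$1 * B$1$2)"
  have "p * q = crossF A * crossF B"
    using nonzero unfolding p_def q_def crossF_def by (simp add: field_simps)
  moreover have "p > 0" "q > 0"
    using pos by (simp_all add: p_def q_def)
  then have "sqrt (p * q) \<le> (p + q) / 2"
    by (intro arith_geo_mean_sqrt) simp_all
  ultimately show "p + q \<ge> 2 * sqrt (crossF A * crossF B)"
    by simp
  show "crossF (A ** B) = (p + q + crossF A * crossF B + 1) / (p + q + crossF A + crossF B)"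
    using cross_ratio_product[where a = "A$1$1" and b = "A$1$2" and c = "A$2$1" and d = "A$2$2"
        and e = "B$1$1" and f = "B$1$2" and g = "B$2$1" and h = "B$2$2"]
    by (simp add: nonzero p_def q_def crossF_def matrix_matrix_mult_def sum_2)
qed

lemma sqrt_inverse_mult:
  fixes u v :: real
  assumes "u > 0"
  shows "sqrt (1 / u * v) = sqrt (u * v) / u"
proof -
  have "sqrt (u * v) / u = (sqrt u * sqrt v) / (sqrt u * sqrt u)"
    using assms by (simp add: real_sqrt_mult)
  also have "\<dots> = sqrt v / sqrt u"
    using assms by (intro mult_divide_mult_cancel_left) simp
  finally show ?thesis
    by (simp add: real_sqrt_divide)
qed

lemma distortion_matrix_mult_le_Phi:
  fixes A B :: "real^2^2"
  assumes "pos_matrix A" "pos_matrix B" "distortion A \<le> \<alpha>" "distortion B \<le> \<beta>"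
  shows "distortion (A ** B) \<le> Phi \<alpha> \<beta>"
proof -
  obtain k where k: "k \<ge> 2 * sqrt (crossF A * crossF B)"
    and cross: "crossF (A ** B) = (k + crossF A * crossF B + 1) / (k + crossF A + crossF B)"
    using assms(1,2) by (rule crossF_matrix_mult)
  define u v where "u = crossF A" and "v = crossF B"
  have uv: "u > 0" "v > 0"
    using assms(1,2) by (simp_all add: u_def v_def crossF_pos)
  have bounds: "max u (1 / u) \<le> \<alpha>" "max v (1 / v) \<le> \<beta>"
    using assms(3,4) by (simp_all add: u_def v_def distortion_def)
  have "crossF (A ** B) \<le> Phi \<alpha> \<beta>"
    unfolding cross using uv k bounds by (intro cross_ratio_le_Phi) (simp_all add: u_def v_def)
  \<comment> \<open>The reciprocal is the same cross ratio for \<open>1 / u\<close> in place of \<open>u\<close>.\<close>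
  have "1 / crossF (A ** B) = (k + u + v) / (k + u * v + 1)"
    unfolding cross u_def v_def by simp
  also have "\<dots> = (u * (k / u + 1 / u * v + 1)) / (u * (k / u + 1 / u + v))"
    using uv by (simp add: algebra_simps)
  also have "\<dots> = (k / u + 1 / u * v + 1) / (k / u + 1 / u + v)"
    using uv by simp
  also have "\<dots> \<le> Phi \<alpha> \<beta>"
  proof (rule cross_ratio_le_Phi)
    have "sqrt (1 / u * v) = sqrt (u * v) / u"
      using uv(1) by (rule sqrt_inverse_mult)
    then show "k / u \<ge> 2 * sqrt (1 / u * v)"
      using uv k by (simp add: u_def v_def divide_right_mono)
    show "max (1 / u) (1 / (1 / u)) \<le> \<alpha>"
      using bounds by (simp add: max.commute)
  qed (use uv bounds in simp_all)
  finally show ?thesis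
    using \<open>crossF (A ** B) \<le> Phi \<alpha> \<beta>\<close> by (simp add: distortion_def)
qed

theorem mainTheorem2:
  shows "(\<forall>\<beta>\<ge>1. mono_on {1..} (\<lambda>\<alpha>. Phi \<alpha> \<beta>))
       \<and> (\<forall>\<alpha>\<ge>1. mono_on {1..} (\<lambda>\<beta>. Phi \<alpha> \<beta>))
       \<and> (\<forall>(A::real^2^2) (B::real^2^2) \<alpha> \<beta>.
            pos_matrix A \<longrightarrow> pos_matrix B \<longrightarrow> \<alpha> \<ge> 1 \<longrightarrow> \<beta> \<ge> 1 \<longrightarrow>
            distortion A \<le> \<alpha> \<longrightarrow> distortion B \<le> \<beta> \<longrightarrow>
            distortion (A ** B) \<le> Phi \<alpha> \<beta>)"
  by (auto intro!: mono_onI Phi_mono distortion_matrix_mult_le_Phi)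

end
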